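(* Let $p$ be a probability density on $\mathbb{R}$ such that the additive noise mechanism $f\mapsto f(D)+Z$, $Z\sim p$, satisfies $(\alpha,\epsilon_g(\alpha))$-RDP for every scalar function $f$ of global sensitivity $2$. Consider Report-Noisy-Max on the gaps $C_j(D)=h_{(j)}(D)-h_{(j+1)}(D)$, i.e. the mechanism $\mathcal{M}(D)=\operatorname{argmax}_{j}\{C_j(D)+Z_j\}$ where the $Z_j$ are i.i.d. with density $p$ (the same noise distribution on every coordinate). Then for all neighboring datasets $D,D'$ and all $\alpha>1$, $$\mathbb{D}_\alpha(\mathcal{M}(D)\|\mathcal{M}(D'))\le\epsilon_g(\alpha)+\frac{\log m}{\alpha-1}.$$
   Context: Setting: a dataset consists of users; there are $m$ candidates and each user votes $1$ for an arbitrary subset of candidates; $h_j(D)$ is the number of users voting for candidate $j$. Datasets are neighboring if one is obtained from the other by adding or removing one user. $h_{(1)}\ge\dots\ge h_{(m)}$ are the sorted counts. The Rényi divergence of order $\alpha>1$ is $\mathbb{D}_\alpha(P\|Q)=\frac{1}{\alpha-1}\log\mathbb{E}_{o\sim Q}[(P(o)/Q(o))^\alpha]$; a mechanism is $(\alpha,\epsilon(\alpha))$-RDP for a function class if this divergence between outputs on neighboring inputs is at most $\epsilon(\alpha)$. *)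

theory Defs
  imports "HOL-Probability.Probability"
begin

text \<open>A dataset is a multiset of users; each user is represented by the set of
candidates (out of the candidates 0,...,m-1) that the user votes for.\<close>

type_synonym dataset = "nat set multiset"

definition valid_dataset :: "nat \<Rightarrow> dataset \<Rightarrow> bool" where
  "valid_dataset m D \<longleftrightarrow> (\<forall>S\<in>#D. S \<subseteq> {..<m})"

definition neighboring :: "nat \<Rightarrow> dataset \<Rightarrow> dataset \<Rightarrow> bool" where
  "neighboring m D D' \<longleftrightarrow> valid_dataset m D \<and> valid_dataset m D' \<and>
     (\<exists>S. D' = D + {#S#} \<or> D = D' + {#S#})"

definition sensitivity_le :: "nat \<Rightarrow> (dataset \<Rightarrow> real) \<Rightarrow> real \<Rightarrow> bool" where
  "sensitivity_le m f s \<longleftrightarrow> (\<forall>D D'. neighboring m D D' \<longrightarrow> \<bar>f D - f D'\<bar> \<le> s)"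

definition hcount :: "dataset \<Rightarrow> nat \<Rightarrow> nat" where
  "hcount D j = size (filter_mset (\<lambda>S. j \<in> S) D)"

text \<open>Counts sorted in non-increasing order; entry i (0-based) is h_(i+1).\<close>
definition sorted_counts :: "nat \<Rightarrow> dataset \<Rightarrow> nat list" where
  "sorted_counts m D = rev (sort (map (hcount D) [0..<m]))"

text \<open>Gap i (0-based, i < m-1) is C_(i+1)(D) = h_(i+1)(D) - h_(i+2)(D).\<close>
definition gap :: "nat \<Rightarrow> dataset \<Rightarrow> nat \<Rightarrow> real" where
  "gap m D i = real (sorted_counts m D ! i) - real (sorted_counts m D ! (i + 1))"

definition renyi_term :: "real \<Rightarrow> real \<Rightarrow> real \<Rightarrow> ennreal" where
  "renyi_term \<alpha> x y =
     (if y = 0 then (if x = 0 then 0 else \<infinity>) else ennreal (y * (x / y) powr \<alpha>))"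

definition renyi_of_moment :: "real \<Rightarrow> ennreal \<Rightarrow> ereal" where
  "renyi_of_moment \<alpha> M =
     (if M = \<infinity> then \<infinity> else if M = 0 then -\<infinity>
      else ereal (ln (enn2real M) / (\<alpha> - 1)))"

definition renyi_div_dens :: "real \<Rightarrow> (real \<Rightarrow> real) \<Rightarrow> (real \<Rightarrow> real) \<Rightarrow> ereal" where
  "renyi_div_dens \<alpha> P Q = renyi_of_moment \<alpha> (\<integral>\<^sup>+ x. renyi_term \<alpha> (P x) (Q x) \<partial>lborel)"

definition renyi_div_disc :: "real \<Rightarrow> nat \<Rightarrow> (nat \<Rightarrow> real) \<Rightarrow> (nat \<Rightarrow> real) \<Rightarrow> ereal" where
  "renyi_div_disc \<alpha> k P Q = renyi_of_moment \<alpha> (\<Sum>j<k. renyi_term \<alpha> (P j) (Q j))"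

definition additive_out_density :: "(real \<Rightarrow> real) \<Rightarrow> (dataset \<Rightarrow> real) \<Rightarrow> dataset \<Rightarrow> real \<Rightarrow> real" where
  "additive_out_density p f D = (\<lambda>x. p (x - f D))"

text \<open>Argmax over indices 0..<k (ties broken towards the least index; ties have
  probability zero for continuous noise).\<close>
definition argmax_idx :: "nat \<Rightarrow> (nat \<Rightarrow> real) \<Rightarrow> nat" where
  "argmax_idx k v = (LEAST j. j < k \<and> (\<forall>i<k. v i \<le> v j))"

definition noise :: "nat \<Rightarrow> (real \<Rightarrow> real) \<Rightarrow> (nat \<Rightarrow> real) measure" where
  "noise k p = PiM {..<k} (\<lambda>_. density lborel (\<lambda>x. ennreal (p x)))"

definition rnm_gap_prob :: "nat \<Rightarrow> (real \<Rightarrow> real) \<Rightarrow> dataset \<Rightarrow> nat \<Rightarrow> real" where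
  "rnm_gap_prob m p D j =
     measure (noise (m - 1) p)
       {z \<in> space (noise (m - 1) p). argmax_idx (m - 1) (\<lambda>i. gap m D i + z i) = j}"

end

theory Submission
  imports Defs
begin

text \<open>Fix an output j. Conditioning on the noise of the other coordinates, Report-Noisy-Max
  outputs j exactly when Z_j exceeds the threshold max_{i ~= j} (C_i + Z_i) - C_j. Adding or
  removing a user moves every sorted count by at most 1 in the same direction, so each gap moves
  by at most 1 and the threshold by at most 2. Hence P(M(D) = j) and P(M(D') = j) are the same
  mixture of tail probabilities of the additive mechanism with shifts at distance at most 2.
  Joint convexity of (x, y) |-> y (x/y)^alpha bounds the Renyi integrand of output j by the
  moment exp((alpha - 1) eps_g(alpha)) of that mechanism; summing over the m - 1 outputs costs
  the factor m, i.e. the term ln m / (alpha - 1).\<close>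

section \<open>Tangent bounds for the Renyi integrand\<close>

lemma powr_tangent_le:
  fixes a r t :: real
  assumes a: "a > 1" and r: "r > 0" and t: "t \<ge> 0"
  shows "a * r powr (a - 1) * t \<le> t powr a + (a - 1) * r powr a"
proof (cases "t = 0")
  case True
  then show ?thesis using a r by simp
next
  case False
  then have "t > 0" using t by simp
  have "(t powr a) powr (1/a) * (r powr a) powr ((a-1)/a) \<le> (1/a) * t powr a + ((a-1)/a) * r powr a"
    using Youngs_inequality_0[of "1/a" "(a-1)/a" "t powr a" "r powr a"] a r \<open>t > 0\<close>
    by (simp add: field_simps)
  moreover have "(t powr a) powr (1/a) = t" "(r powr a) powr ((a-1)/a) = r powr (a - 1)"
    using a r \<open>t > 0\<close> by (simp_all add: powr_powr)
  ultimately show ?thesis using a by (simp add: field_simps)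
qed

lemma renyi_term_ge_tangent:
  fixes a r x y :: real
  assumes a: "a > 1" and r: "r > 0" and x: "x \<ge> 0" and y: "y \<ge> 0"
  shows "ennreal (a * r powr (a - 1) * x) \<le> renyi_term a x y + ennreal ((a - 1) * r powr a * y)"
proof (cases "y = 0")
  case True
  then show ?thesis using x by (cases "x = 0") (auto simp: renyi_term_def)
next
  case False
  then have "y > 0" using y by simp
  have "y * (a * r powr (a - 1) * (x / y)) \<le> y * ((x/y) powr a + (a - 1) * r powr a)"
    using powr_tangent_le[OF a r, of "x/y"] x \<open>y > 0\<close> by (intro mult_left_mono) auto
  then have "a * r powr (a - 1) * x \<le> y * (x/y) powr a + (a - 1) * r powr a * y"
    using \<open>y > 0\<close> by (simp add: field_simps)
  then show ?thesis
    using \<open>y > 0\<close> a by (simp add: renyi_term_def ennreal_plus[symmetric] ennreal_leI del: ennreal_plus)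
qed

text \<open>The tangent bounds are sharp: B (A/B) powr a is their supremum over r > 0, attained at
  r = A/B, and they are unbounded when B = 0 < A.\<close>
lemma renyi_term_le_of_tangent_bounds:
  fixes a A B :: real and R :: ennreal
  assumes a: "a > 1" and A: "A \<ge> 0" and B: "B \<ge> 0"
    and tangent: "\<And>r. r > 0 \<Longrightarrow> ennreal (a * r powr (a - 1) * A) \<le> R + ennreal ((a - 1) * r powr a * B)"
  shows "renyi_term a A B \<le> R"
proof (cases R)
  case (real R0)
  have tangent_real: "a * r powr (a - 1) * A \<le> R0 + (a - 1) * r powr a * B" if "r > 0" for r
    using tangent[OF that] real a that B by (simp add: ennreal_plus[symmetric] del: ennreal_plus)
  consider "A = 0" | "A > 0" "B = 0" | "B > 0" using A B by linarith
  then show ?thesis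
  proof cases
    case 1
    then show ?thesis by (simp add: renyi_term_def)
  next
    case 2
    define r where "r = ((R0 + 1) / (a * A)) powr (1 / (a - 1))"
    have "r > 0" "r powr (a - 1) = (R0 + 1) / (a * A)"
      unfolding r_def using real 2 a by (simp_all add: powr_powr)
    then show ?thesis using tangent_real[of r] 2 a by (simp add: field_simps)
  next
    case 3
    have "B * (A / B) powr a = a * (A / B) powr (a - 1) * A - (a - 1) * (A / B) powr a * B"
      using 3 A a by (simp add: powr_diff field_simps)
    also have "\<dots> \<le> R0"
      using 3 A real tangent_real[of "A / B"] by (cases "A = 0") (simp_all add: renyi_term_def)
    finally show ?thesis using 3 real by (simp add: renyi_term_def ennreal_leI)
  qed
qed simp

lemma renyi_term_mult_indicator_le:
  assumes "x \<ge> 0" "y \<ge> 0"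
  shows "renyi_term a (x * indicator A u) (y * indicator A u) \<le> renyi_term a x y"
  using assms by (cases "u \<in> A") (auto simp: renyi_term_def)

lemma renyi_term_same: "x \<ge> 0 \<Longrightarrow> renyi_term a x x = ennreal x"
  by (simp add: renyi_term_def)

lemma measurable_renyi_term[measurable]:
  assumes [measurable]: "f \<in> borel_measurable M" "g \<in> borel_measurable M"
  shows "(\<lambda>x. renyi_term a (f x) (g x)) \<in> borel_measurable M"
  unfolding renyi_term_def by measurable

text \<open>Joint convexity of the Renyi integrand, in integral form (Jensen's inequality for the
  perspective of t powr a): integrate the tangent bounds and use their sharpness.\<close>
lemma renyi_term_nn_integral_le:
  fixes f g :: "'a \<Rightarrow> real"
  assumes a: "a > 1"
    and [measurable]: "f \<in> borel_measurable M" "g \<in> borel_measurable M"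
    and f0: "\<And>x. f x \<ge> 0" and g0: "\<And>x. g x \<ge> 0"
    and fin: "(\<integral>\<^sup>+x. f x \<partial>M) < \<infinity>" "(\<integral>\<^sup>+x. g x \<partial>M) < \<infinity>"
  shows "renyi_term a (enn2real (\<integral>\<^sup>+x. f x \<partial>M)) (enn2real (\<integral>\<^sup>+x. g x \<partial>M))
     \<le> (\<integral>\<^sup>+x. renyi_term a (f x) (g x) \<partial>M)"
proof (rule renyi_term_le_of_tangent_bounds[OF a])
  fix r :: real assume r: "r > 0"
  have cmult: "(\<integral>\<^sup>+x. ennreal (c * h x) \<partial>M) = ennreal (c * enn2real (\<integral>\<^sup>+x. h x \<partial>M))"
    if "h \<in> borel_measurable M" "c \<ge> 0" "\<And>x. h x \<ge> 0" "(\<integral>\<^sup>+x. h x \<partial>M) < \<infinity>"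
    for c and h :: "'a \<Rightarrow> real"
    using that by (simp add: nn_integral_cmult ennreal_mult ennreal_enn2real_if less_top[symmetric])
  have "ennreal (a * r powr (a - 1) * enn2real (\<integral>\<^sup>+x. f x \<partial>M))
      = (\<integral>\<^sup>+x. ennreal (a * r powr (a - 1) * f x) \<partial>M)"
    using a r f0 fin by (subst cmult) auto
  also have "\<dots> \<le> (\<integral>\<^sup>+x. renyi_term a (f x) (g x) + ennreal ((a - 1) * r powr a * g x) \<partial>M)"
    by (intro nn_integral_mono renyi_term_ge_tangent a r f0 g0)
  also have "\<dots> = (\<integral>\<^sup>+x. renyi_term a (f x) (g x) \<partial>M)
      + ennreal ((a - 1) * r powr a * enn2real (\<integral>\<^sup>+x. g x \<partial>M))"
    using a r g0 fin by (subst nn_integral_add) (auto simp: cmult)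
  finally show "ennreal (a * r powr (a - 1) * enn2real (\<integral>\<^sup>+x. f x \<partial>M))
      \<le> (\<integral>\<^sup>+x. renyi_term a (f x) (g x) \<partial>M)
        + ennreal ((a - 1) * r powr a * enn2real (\<integral>\<^sup>+x. g x \<partial>M))" .
qed auto

lemma moment_le_of_renyi_of_moment_le:
  assumes a: "a > 1" and le: "renyi_of_moment a M \<le> ereal e"
  shows "M \<le> ennreal (exp ((a - 1) * e))"
proof (cases "M = \<infinity> \<or> M = 0")
  case False
  then obtain r where r: "M = ennreal r" "r > 0"
    by (cases M rule: ennreal_cases) auto
  then have "ln r \<le> (a - 1) * e"
    using le False a by (simp add: renyi_of_moment_def divide_le_eq mult.commute)
  then have "r \<le> exp ((a - 1) * e)"
    using r by (metis exp_le_cancel_iff exp_ln)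
  then show ?thesis
    using r by (simp add: ennreal_leI)
qed (use le in \<open>auto simp: renyi_of_moment_def\<close>)

lemma renyi_of_moment_le_of_moment_le:
  assumes a: "a > 1" and c: "c > 0" and le: "M \<le> ennreal (c * exp ((a - 1) * e))"
  shows "renyi_of_moment a M \<le> ereal (e + ln c / (a - 1))"
proof (cases "M = 0")
  case False
  moreover obtain r where r: "M = ennreal r" "r \<ge> 0"
    using le by (cases M rule: ennreal_cases) (auto simp: top_unique)
  ultimately have "r > 0" by auto
  have "ln r \<le> ln (c * exp ((a - 1) * e))"
    using le r \<open>r > 0\<close> c by (simp add: ennreal_le_iff)
  also have "\<dots> = ln c + (a - 1) * e"
    using c by (simp add: ln_mult)
  finally have "ln r / (a - 1) \<le> e + ln c / (a - 1)"
    using a by (simp add: divide_simps mult.commute)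
  then show ?thesis
    using r False by (simp add: renyi_of_moment_def)
qed (simp add: renyi_of_moment_def)

lemma shift_moment_le:
  fixes p :: "real \<Rightarrow> real"
  assumes rdp: "\<And>\<alpha> f D D'. \<alpha> > 1 \<Longrightarrow> sensitivity_le m f 2 \<Longrightarrow> neighboring m D D' \<Longrightarrow>
       renyi_div_dens \<alpha> (additive_out_density p f D) (additive_out_density p f D')
         \<le> ereal (eps_g \<alpha>)"
    and a: "a > 1" and s: "\<bar>s - s'\<bar> \<le> 2"
  shows "(\<integral>\<^sup>+u. renyi_term a (p (u + s)) (p (u + s')) \<partial>lborel) \<le> ennreal (exp ((a - 1) * eps_g a))"
proof -
  define f :: "dataset \<Rightarrow> real" where "f X = (if X = {#} then - s else - s')" for X
  have "sensitivity_le m f 2"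
    using s unfolding sensitivity_le_def neighboring_def f_def by (auto simp: abs_minus_commute)
  moreover have "neighboring m {#} {#{}#}"
    by (simp add: neighboring_def valid_dataset_def)
  ultimately have "renyi_div_dens a (additive_out_density p f {#}) (additive_out_density p f {#{}#})
      \<le> ereal (eps_g a)"
    by (rule rdp[OF a])
  then show ?thesis
    by (intro moment_le_of_renyi_of_moment_le[OF a])
       (simp add: renyi_div_dens_def additive_out_density_def f_def)
qed

section \<open>Sensitivity of the gaps\<close>

lemma sorted_nth_le_iff_length_filter:
  fixes zs :: "'a::linorder list"
  assumes sorted: "sorted zs" and k: "k < length zs"
  shows "zs ! k \<le> t \<longleftrightarrow> k < length (filter (\<lambda>x. x \<le> t) zs)"
proof -
  let ?S = "{i. i < length zs \<and> zs ! i \<le> t}"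
  have len: "length (filter (\<lambda>x. x \<le> t) zs) = card ?S"
    by (simp add: length_filter_conv_card)
  show ?thesis
  proof
    assume "zs ! k \<le> t"
    then have "{..k} \<subseteq> ?S"
      using sorted k by (auto intro: order_trans sorted_nth_mono)
    then show "k < length (filter (\<lambda>x. x \<le> t) zs)"
      unfolding len using card_mono[of ?S "{..k}"] by fastforce
  next
    assume "k < length (filter (\<lambda>x. x \<le> t) zs)"
    moreover have "?S \<subseteq> {..<k}" if "\<not> zs ! k \<le> t"
      using that sorted_nth_mono[OF sorted, of k] by (force simp: not_less[symmetric])
    ultimately show "zs ! k \<le> t"
      unfolding len using card_mono[of "{..<k}" ?S] by fastforce
  qed
qed

lemma sort_nth_le_sort_nth_add:
  fixes xs ys :: "'a::{linorder, ordered_ab_semigroup_add} list"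
  assumes len: "length xs = length ys" and le: "\<And>i. i < length xs \<Longrightarrow> xs ! i \<le> ys ! i + c"
    and k: "k < length xs"
  shows "sort xs ! k \<le> sort ys ! k + c"
proof -
  let ?t = "sort ys ! k"
  have "k < length (filter (\<lambda>x. x \<le> ?t) ys)"
    using sorted_nth_le_iff_length_filter[of "sort ys" k ?t] k len by (simp add: filter_sort)
  also have "\<dots> = card {i. i < length ys \<and> ys ! i \<le> ?t}"
    by (simp add: length_filter_conv_card)
  also have "\<dots> \<le> card {i. i < length xs \<and> xs ! i \<le> ?t + c}"
    using len le by (intro card_mono) (auto intro: order_trans add_right_mono)
  also have "\<dots> = length (filter (\<lambda>x. x \<le> ?t + c) (sort xs))"
    by (simp add: length_filter_conv_card filter_sort)
  finally show ?thesis
    using sorted_nth_le_iff_length_filter[of "sort xs" k] k by simp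
qed

lemma sorted_counts_nth_le:
  assumes "\<And>l. hcount D l \<le> hcount D' l + c" "i < m"
  shows "sorted_counts m D ! i \<le> sorted_counts m D' ! i + c"
  using assms sort_nth_le_sort_nth_add[of "map (hcount D) [0..<m]" "map (hcount D') [0..<m]" c "m - Suc i"]
  by (simp add: sorted_counts_def rev_nth)

lemma gap_add_user:
  assumes "Suc i < m"
  shows "\<bar>gap m D i - gap m (D + {#S#}) i\<bar> \<le> 1"
proof -
  have "hcount D l \<le> hcount (D + {#S#}) l + 0" "hcount (D + {#S#}) l \<le> hcount D l + 1" for l
    by (simp_all add: hcount_def)
  then have "real (sorted_counts m D ! l) \<le> real (sorted_counts m (D + {#S#}) ! l)"
    and "real (sorted_counts m (D + {#S#}) ! l) \<le> real (sorted_counts m D ! l) + 1" if "l < m" for l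
    using sorted_counts_nth_le[of D "D + {#S#}" 0 l m] sorted_counts_nth_le[of "D + {#S#}" D 1 l m] that
    by simp_all
  from this[of i] this[of "Suc i"] show ?thesis
    using assms unfolding gap_def by simp
qed

lemma gap_neighboring:
  assumes "neighboring m D D'" "Suc i < m"
  shows "\<bar>gap m D i - gap m D' i\<bar> \<le> 1"
  using assms gap_add_user[of i m D] gap_add_user[of i m D'] unfolding neighboring_def
  by (auto simp: abs_minus_commute)

section \<open>Report-Noisy-Max as a mixture of tail probabilities\<close>

lemma argmax_idx_eq_iff:
  fixes v :: "nat \<Rightarrow> real"
  assumes j: "j < k"
  shows "argmax_idx k v = j \<longleftrightarrow> (\<forall>i<k. v i \<le> v j) \<and> (\<forall>i<j. v i < v j)"
proof -
  define P where "P j' \<longleftrightarrow> j' < k \<and> (\<forall>i<k. v i \<le> v j')" for j'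
  have "Max (v ` {..<k}) \<in> v ` {..<k}"
    using j by (intro Max_in) auto
  then obtain j' where "j' < k" "v j' = Max (v ` {..<k})"
    by auto
  then have "P j'"
    unfolding P_def by simp
  have "(LEAST j'. P j') = j \<longleftrightarrow> P j \<and> (\<forall>i<j. \<not> P i)"
    using LeastI[of P, OF \<open>P j'\<close>] not_less_Least[of _ P] Least_equality[of P j]
    by (metis not_le)
  also have "\<dots> \<longleftrightarrow> (\<forall>i<k. v i \<le> v j) \<and> (\<forall>i<j. v i < v j)"
    using j unfolding P_def by (auto simp: not_le) (meson less_le_trans not_le order.strict_trans)
  finally show ?thesis
    unfolding argmax_idx_def P_def .
qed

lemma Max_image_le_Max_image_add:
  fixes f g :: "'a \<Rightarrow> 'b::{linorder, ordered_ab_semigroup_add}"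
  assumes "finite I" "I \<noteq> {}" "\<And>i. i \<in> I \<Longrightarrow> f i \<le> g i + c"
  shows "Max (f ` I) \<le> Max (g ` I) + c"
  using assms by (auto simp: Max_le_iff intro!: order_trans[OF _ add_right_mono[OF Max_ge]])

lemma argmax_idx_fun_upd_eq:
  fixes v :: "nat \<Rightarrow> real"
  assumes j: "j < k" and less: "Max (v ` ({..<k} - {j})) < w"
  shows "argmax_idx k (v(j := w)) = j"
proof -
  have "v i < w" if "i < k" "i \<noteq> j" for i
    using that by (intro le_less_trans[OF Max_ge less]) auto
  then show ?thesis
    using j by (subst argmax_idx_eq_iff) (auto intro: less_imp_le)
qed

lemma Max_le_of_argmax_idx_fun_upd_eq:
  fixes v :: "nat \<Rightarrow> real"
  assumes j: "j < k" and "{..<k} - {j} \<noteq> {}" and "argmax_idx k (v(j := w)) = j"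
  shows "Max (v ` ({..<k} - {j})) \<le> w"
proof -
  have "\<forall>i<k. (v(j := w)) i \<le> w"
    using assms argmax_idx_eq_iff[OF j, of "v(j := w)"] by auto
  then show ?thesis
    using assms by (auto simp: Max_le_iff split: if_splits)
qed

abbreviation pdf_measure :: "(real \<Rightarrow> real) \<Rightarrow> real measure" where
  "pdf_measure p \<equiv> density lborel (\<lambda>x. ennreal (p x))"

lemma prob_space_pdf_measure:
  assumes "p \<in> borel_measurable borel" "(\<integral>\<^sup>+x. ennreal (p x) \<partial>lborel) = 1"
  shows "prob_space (pdf_measure p)"
  using assms by (intro prob_spaceI) (simp add: emeasure_density)

lemma emeasure_pdf_measure_atLeast:
  assumes [measurable]: "p \<in> borel_measurable borel"
  shows "emeasure (pdf_measure p) {t..} = emeasure (pdf_measure p) {t<..}"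
proof -
  have "(\<integral>\<^sup>+y. ennreal (p y) * indicator {t..} y \<partial>lborel) = (\<integral>\<^sup>+y. ennreal (p y) * indicator {t<..} y \<partial>lborel)"
    by (intro nn_integral_cong_AE eventually_mono[OF AE_lborel_singleton[of t]]) (auto simp: indicator_def)
  then show ?thesis
    by (simp add: emeasure_density)
qed

lemma emeasure_pdf_measure_greaterThan:
  assumes [measurable]: "p \<in> borel_measurable borel"
  shows "emeasure (pdf_measure p) {t<..} = (\<integral>\<^sup>+u. ennreal (p (u + t) * indicator {0<..} u) \<partial>lborel)"
proof -
  have "emeasure (pdf_measure p) {t<..} = (\<integral>\<^sup>+y. ennreal (p y) * indicator {t<..} y \<partial>lborel)"
    by (simp add: emeasure_density)
  also have "\<dots> = (\<integral>\<^sup>+u. ennreal (p (t + u)) * indicator {t<..} (t + u) \<partial>lborel)"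
    using nn_integral_real_affine[of "\<lambda>y. ennreal (p y) * indicator {t<..} y" 1 t] by simp
  also have "\<dots> = (\<integral>\<^sup>+u. ennreal (p (u + t) * indicator {0<..} u) \<partial>lborel)"
    by (intro nn_integral_cong) (auto simp: indicator_def add.commute)
  finally show ?thesis .
qed

lemma sets_noise_argmax:
  fixes c :: "nat \<Rightarrow> real"
  shows "{z \<in> space (noise k p). argmax_idx k (\<lambda>i. c i + z i) = j} \<in> sets (noise k p)"
  unfolding noise_def argmax_idx_def
  by measurable
    (unfold pred_def, intro borel_measurable_le borel_measurable_add borel_measurable_const;
     rule measurable_component_singleton; simp)

text \<open>Integrate out the j-th coordinate last: given the others, output j wins as soon as Z_j
  exceeds the threshold, and the tie-breaking of argmax_idx only matters on the null set where
  Z_j equals it.\<close>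
lemma emeasure_noise_argmax:
  fixes p :: "real \<Rightarrow> real" and c :: "nat \<Rightarrow> real"
  assumes [measurable]: "p \<in> borel_measurable borel" and p_int: "(\<integral>\<^sup>+x. ennreal (p x) \<partial>lborel) = 1"
    and j: "j < k" and k: "2 \<le> k"
  defines "I \<equiv> {..<k} - {j}"
  shows "emeasure (noise k p) {z \<in> space (noise k p). argmax_idx k (\<lambda>i. c i + z i) = j}
    = (\<integral>\<^sup>+x. emeasure (pdf_measure p) {Max ((\<lambda>i. c i + x i) ` I) - c j<..} \<partial>PiM I (\<lambda>_. pdf_measure p))"
proof -
  let ?N = "pdf_measure p"
  define E where "E = {z \<in> space (noise k p). argmax_idx k (\<lambda>i. c i + z i) = j}"
  define T where "T x = Max ((\<lambda>i. c i + x i) ` I) - c j" for x :: "nat \<Rightarrow> real"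
  interpret N: prob_space ?N
    by (rule prob_space_pdf_measure) fact+
  interpret product_prob_space "\<lambda>_. ?N" ..
  have noise: "noise k p = PiM (insert j I) (\<lambda>_. ?N)"
    using j unfolding noise_def I_def by (simp add: insert_absorb)
  have "(if j = 0 then 1 else 0) \<in> I"
    using j k unfolding I_def by auto
  then have I: "finite I" "j \<notin> I" "I \<noteq> {}"
    unfolding I_def by auto
  have slice: "(\<integral>\<^sup>+y. indicator E (x(j := y)) \<partial>?N) = emeasure ?N {T x<..}"
    if x: "x \<in> space (PiM I (\<lambda>_. ?N))" for x
  proof -
    have "x(j := y) \<in> space (noise k p)" for y
      using x by (simp add: noise space_PiM PiE_fun_upd)
    moreover have "(\<lambda>i. c i + (x(j := y)) i) = (\<lambda>i. c i + x i)(j := c j + y)" for y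
      by (simp add: fun_eq_iff)
    ultimately have mem: "x(j := y) \<in> E \<longleftrightarrow> argmax_idx k ((\<lambda>i. c i + x i)(j := c j + y)) = j" for y
      unfolding E_def by simp
    have "x(j := y) \<in> E" if "T x < y" for y
    proof -
      have "Max ((\<lambda>i. c i + x i) ` I) < c j + y"
        using that unfolding T_def by linarith
      then show ?thesis
        using mem argmax_idx_fun_upd_eq[OF j] unfolding I_def by blast
    qed
    moreover have "T x \<le> y" if "x(j := y) \<in> E" for y
    proof -
      have "Max ((\<lambda>i. c i + x i) ` I) \<le> c j + y"
        using that mem Max_le_of_argmax_idx_fun_upd_eq[OF j] I unfolding I_def by blast
      then show ?thesis
        unfolding T_def by linarith
    qed
    ultimately have "indicator {T x<..} y \<le> (indicator E (x(j := y)) :: ennreal)"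
      and "indicator E (x(j := y)) \<le> (indicator {T x..} y :: ennreal)" for y
      by (auto simp: indicator_def)
    then have "emeasure ?N {T x<..} \<le> (\<integral>\<^sup>+y. indicator E (x(j := y)) \<partial>?N)"
      and "(\<integral>\<^sup>+y. indicator E (x(j := y)) \<partial>?N) \<le> emeasure ?N {T x..}"
      by (auto simp flip: nn_integral_indicator intro!: nn_integral_mono)
    then show ?thesis
      using emeasure_pdf_measure_atLeast[of p "T x"] by simp
  qed
  have "E \<in> sets (PiM (insert j I) (\<lambda>_. ?N))"
    using sets_noise_argmax noise unfolding E_def by metis
  then have "emeasure (noise k p) E = (\<integral>\<^sup>+x. \<integral>\<^sup>+y. indicator E (x(j := y)) \<partial>?N \<partial>PiM I (\<lambda>_. ?N))"
    using I by (simp add: noise product_nn_integral_insert del: nn_integral_indicator flip: nn_integral_indicator)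
  also have "\<dots> = (\<integral>\<^sup>+x. emeasure ?N {T x<..} \<partial>PiM I (\<lambda>_. ?N))"
    by (intro nn_integral_cong slice)
  finally show ?thesis
    unfolding E_def T_def .
qed

lemma renyi_term_tail_mixture_le:
  fixes p :: "real \<Rightarrow> real" and T T' :: "'a \<Rightarrow> real" and B :: ennreal
  assumes a: "a > 1" and M: "prob_space M"
    and [measurable]: "p \<in> borel_measurable borel" and p_nonneg: "\<And>x. p x \<ge> 0"
    and p_int: "(\<integral>\<^sup>+x. ennreal (p x) \<partial>lborel) = 1"
    and [measurable]: "T \<in> borel_measurable M" "T' \<in> borel_measurable M"
    and close: "\<And>x. x \<in> space M \<Longrightarrow> \<bar>T x - T' x\<bar> \<le> 2"
    and shift: "\<And>s s'. \<bar>s - s'\<bar> \<le> 2 \<Longrightarrow> (\<integral>\<^sup>+u. renyi_term a (p (u + s)) (p (u + s')) \<partial>lborel) \<le> B"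
  shows "renyi_term a (enn2real (\<integral>\<^sup>+x. emeasure (pdf_measure p) {T x<..} \<partial>M))
                      (enn2real (\<integral>\<^sup>+x. emeasure (pdf_measure p) {T' x<..} \<partial>M)) \<le> B"
proof -
  interpret M: prob_space M by (fact M)
  interpret N: prob_space "pdf_measure p"
    by (rule prob_space_pdf_measure) fact+
  define f where "f S z = p (snd z + S (fst z)) * indicator {0<..} (snd z)"
    for S :: "'a \<Rightarrow> real" and z :: "'a \<times> real"
  have f_meas: "f S \<in> borel_measurable (M \<Otimes>\<^sub>M lborel)" if "S \<in> borel_measurable M" for S
    using that unfolding f_def by measurable
  have tail: "(\<integral>\<^sup>+x. emeasure (pdf_measure p) {S x<..} \<partial>M) = (\<integral>\<^sup>+z. f S z \<partial>(M \<Otimes>\<^sub>M lborel))"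
    if "S \<in> borel_measurable M" for S
  proof -
    note that[measurable]
    have "(\<integral>\<^sup>+x. emeasure (pdf_measure p) {S x<..} \<partial>M) = (\<integral>\<^sup>+x. \<integral>\<^sup>+u. f S (x, u) \<partial>lborel \<partial>M)"
      by (simp add: emeasure_pdf_measure_greaterThan f_def)
    also have "\<dots> = (\<integral>\<^sup>+z. f S z \<partial>(M \<Otimes>\<^sub>M lborel))"
      unfolding f_def by (rule lborel.nn_integral_fst) measurable
    finally show ?thesis .
  qed
  have fin: "(\<integral>\<^sup>+x. emeasure (pdf_measure p) {S x<..} \<partial>M) < \<infinity>" for S
  proof -
    have "(\<integral>\<^sup>+x. emeasure (pdf_measure p) {S x<..} \<partial>M) \<le> (\<integral>\<^sup>+x. 1 \<partial>M)"
      by (intro nn_integral_mono N.emeasure_le_1)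
    also have "\<dots> = 1"
      by (simp add: M.emeasure_space_1)
    finally show ?thesis
      unfolding infinity_ennreal_def using ennreal_one_less_top by (rule order.strict_trans1)
  qed
  have "renyi_term a (enn2real (\<integral>\<^sup>+x. emeasure (pdf_measure p) {T x<..} \<partial>M))
                     (enn2real (\<integral>\<^sup>+x. emeasure (pdf_measure p) {T' x<..} \<partial>M))
      \<le> (\<integral>\<^sup>+z. renyi_term a (f T z) (f T' z) \<partial>(M \<Otimes>\<^sub>M lborel))"
    using renyi_term_nn_integral_le[OF a f_meas f_meas] fin[of T] fin[of T'] p_nonneg
    by (simp add: tail f_def)
  also have "\<dots> = (\<integral>\<^sup>+x. \<integral>\<^sup>+u. renyi_term a (f T (x, u)) (f T' (x, u)) \<partial>lborel \<partial>M)"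
    by (rule lborel.nn_integral_fst[symmetric, OF measurable_renyi_term[OF f_meas f_meas]]) measurable
  also have "\<dots> \<le> (\<integral>\<^sup>+x. \<integral>\<^sup>+u. renyi_term a (p (u + T x)) (p (u + T' x)) \<partial>lborel \<partial>M)"
    unfolding f_def using p_nonneg by (simp add: nn_integral_mono renyi_term_mult_indicator_le)
  also have "\<dots> \<le> (\<integral>\<^sup>+x. B \<partial>M)"
    by (intro nn_integral_mono shift close)
  also have "\<dots> = B"
    by (simp add: M.emeasure_space_1)
  finally show ?thesis .
qed

definition rnm_prob :: "nat \<Rightarrow> (real \<Rightarrow> real) \<Rightarrow> (nat \<Rightarrow> real) \<Rightarrow> nat \<Rightarrow> real" where
  "rnm_prob k p c j = measure (noise k p) {z \<in> space (noise k p). argmax_idx k (\<lambda>i. c i + z i) = j}"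

lemma renyi_term_rnm_prob_le:
  fixes p :: "real \<Rightarrow> real" and c c' :: "nat \<Rightarrow> real" and B :: ennreal
  assumes a: "a > 1"
    and p_meas[measurable]: "p \<in> borel_measurable borel" and p_nonneg: "\<And>x. p x \<ge> 0"
    and p_int: "(\<integral>\<^sup>+x. ennreal (p x) \<partial>lborel) = 1"
    and shift: "\<And>s s'. \<bar>s - s'\<bar> \<le> 2 \<Longrightarrow> (\<integral>\<^sup>+u. renyi_term a (p (u + s)) (p (u + s')) \<partial>lborel) \<le> B"
    and close: "\<And>i. i < k \<Longrightarrow> \<bar>c i - c' i\<bar> \<le> 1" and j: "j < k"
  shows "renyi_term a (rnm_prob k p c j) (rnm_prob k p c' j) \<le> B"
proof (cases "k = 1")
  case True
  interpret prob_space "noise k p"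
    unfolding noise_def by (rule prob_space_PiM, rule prob_space_pdf_measure[OF p_meas p_int])
  have "argmax_idx k v = j" for v
    using True j argmax_idx_eq_iff[OF j, of v] by simp
  then have "rnm_prob k p cc j = 1" for cc
    by (simp add: rnm_prob_def prob_space)
  moreover have "1 \<le> B"
    using shift[of 0 0] p_nonneg p_int by (simp add: renyi_term_same)
  ultimately show ?thesis
    by (simp add: renyi_term_same)
next
  case False
  define I where "I = {..<k} - {j}"
  define T where "T cc x = Max ((\<lambda>i. cc i + x i) ` I) - cc j" for cc x :: "nat \<Rightarrow> real"
  let ?M = "PiM I (\<lambda>_. pdf_measure p)"
  have "(if j = 0 then 1 else 0) \<in> I"
    using j False unfolding I_def by auto
  then have I: "finite I" "I \<noteq> {}"
    unfolding I_def by auto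
  have "(\<lambda>x. x i) \<in> borel_measurable ?M" if "i \<in> I" for i
    using measurable_component_singleton[OF that, of "\<lambda>_. pdf_measure p"] by simp
  then have T_meas: "T cc \<in> borel_measurable ?M" for cc
    unfolding T_def using I by measurable
  have T_close: "\<bar>T c x - T c' x\<bar> \<le> 2" for x
  proof -
    have "Max ((\<lambda>i. c i + x i) ` I) \<le> Max ((\<lambda>i. c' i + x i) ` I) + 1"
      and "Max ((\<lambda>i. c' i + x i) ` I) \<le> Max ((\<lambda>i. c i + x i) ` I) + 1"
      by (rule Max_image_le_Max_image_add; use close I in \<open>force simp: I_def abs_le_iff\<close>)+
    then show ?thesis
      using close[OF j] unfolding T_def by linarith
  qed
  have rnm_prob_eq: "rnm_prob k p cc j = enn2real (\<integral>\<^sup>+x. emeasure (pdf_measure p) {T cc x<..} \<partial>?M)" for cc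
    using False j emeasure_noise_argmax[of p j k cc] p_int unfolding rnm_prob_def measure_def T_def I_def by simp
  have "prob_space ?M"
    by (rule prob_space_PiM, rule prob_space_pdf_measure[OF p_meas p_int])
  then show ?thesis
    unfolding rnm_prob_eq
    by (rule renyi_term_tail_mixture_le[OF a _ p_meas p_nonneg p_int T_meas T_meas T_close shift])
qed

theorem mainTheorem2:
  fixes m :: nat and p :: "real \<Rightarrow> real" and eps_g :: "real \<Rightarrow> real"
  assumes m2: "m \<ge> 2"
    and p_meas: "p \<in> borel_measurable borel"
    and p_nonneg: "\<And>x. p x \<ge> 0"
    and p_int: "(\<integral>\<^sup>+ x. ennreal (p x) \<partial>lborel) = 1"
    and rdp: "\<And>\<alpha> f D D'. \<alpha> > 1 \<Longrightarrow> sensitivity_le m f 2 \<Longrightarrow> neighboring m D D' \<Longrightarrow>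
       renyi_div_dens \<alpha> (additive_out_density p f D) (additive_out_density p f D')
         \<le> ereal (eps_g \<alpha>)"
  shows "\<forall>D D' \<alpha>. neighboring m D D' \<and> \<alpha> > 1 \<longrightarrow>
     renyi_div_disc \<alpha> (m - 1) (rnm_gap_prob m p D) (rnm_gap_prob m p D')
       \<le> ereal (eps_g \<alpha> + ln (real m) / (\<alpha> - 1))"
proof (intro allI impI, elim conjE)
  fix D D' and a :: real
  assume nb: "neighboring m D D'" and a: "a > 1"
  define B where "B = exp ((a - 1) * eps_g a)"
  have "renyi_term a (rnm_gap_prob m p D j) (rnm_gap_prob m p D' j) \<le> ennreal B" if "j < m - 1" for j
    using renyi_term_rnm_prob_le[OF a p_meas p_nonneg p_int shift_moment_le[OF rdp a] _ that]
      gap_neighboring[OF nb]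
    unfolding rnm_gap_prob_def rnm_prob_def B_def by simp
  then have "(\<Sum>j<m - 1. renyi_term a (rnm_gap_prob m p D j) (rnm_gap_prob m p D' j))
      \<le> (\<Sum>j<m - 1. ennreal B)"
    by (intro sum_mono) simp
  also have "\<dots> = ennreal (real (m - 1) * B)"
    unfolding B_def by (simp add: ennreal_mult ennreal_of_nat_eq_real_of_nat)
  also have "\<dots> \<le> ennreal (real m * B)"
    unfolding B_def by (intro ennreal_leI mult_right_mono) auto
  finally show "renyi_div_disc a (m - 1) (rnm_gap_prob m p D) (rnm_gap_prob m p D')
      \<le> ereal (eps_g a + ln (real m) / (a - 1))"
    unfolding renyi_div_disc_def B_def using a m2 by (intro renyi_of_moment_le_of_moment_le) auto
qed

end
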